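(* Let $(Q,\le_Q)$ be a well-quasi-ordered set. A quasi-ordered sequence over $Q$ is a finite sequence $s=(s_1,\dots,s_m)\in Q^m$ together with a quasi-order $\precsim_s$ on the index set $\{1,\dots,m\}$ such that $i<j$ implies $i\precsim_s j$. For quasi-ordered sequences $s$ (of length $m$) and $t$ (of length $m'$), write $s\le t$ if there is a strictly increasing map $f:\{1,\dots,m\}\to\{1,\dots,m'\}$ such that for all $i,j$, $i\precsim_s j$ if and only if $f(i)\precsim_t f(j)$, and for all $i$, $s_i\le_Q t_{f(i)}$. Then $\le$ is a well-quasi-order on the set of quasi-ordered sequences over $Q$.
   Context: A quasi-order is a reflexive, transitive relation. A well-quasi-order is a quasi-order such that every infinite sequence $x_0,x_1,\dots$ has indices $i<j$ with $x_i\le x_j$. *)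

theory Defs
  imports Main
begin

definition qo_on :: "'a set \<Rightarrow> ('a \<Rightarrow> 'a \<Rightarrow> bool) \<Rightarrow> bool" where
  "qo_on A r \<longleftrightarrow> (\<forall>x\<in>A. r x x) \<and> (\<forall>x\<in>A. \<forall>y\<in>A. \<forall>z\<in>A. r x y \<longrightarrow> r y z \<longrightarrow> r x z)"

definition wqo_on :: "'a set \<Rightarrow> ('a \<Rightarrow> 'a \<Rightarrow> bool) \<Rightarrow> bool" where
  "wqo_on A r \<longleftrightarrow> qo_on A r \<and>
     (\<forall>g::nat \<Rightarrow> 'a. (\<forall>i. g i \<in> A) \<longrightarrow> (\<exists>i j. i < j \<and> r (g i) (g j)))"

definition qoseq :: "'a set \<Rightarrow> 'a list \<times> (nat \<Rightarrow> nat \<Rightarrow> bool) \<Rightarrow> bool" where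
  "qoseq Q x \<longleftrightarrow> (case x of (s, R) \<Rightarrow>
     set s \<subseteq> Q \<and> qo_on {..<length s} R \<and>
     (\<forall>i j. i < j \<and> j < length s \<longrightarrow> R i j))"

definition qoseq_le :: "('a \<Rightarrow> 'a \<Rightarrow> bool) \<Rightarrow> 'a list \<times> (nat \<Rightarrow> nat \<Rightarrow> bool)
    \<Rightarrow> 'a list \<times> (nat \<Rightarrow> nat \<Rightarrow> bool) \<Rightarrow> bool" where
  "qoseq_le P x y \<longleftrightarrow> (case x of (s, R) \<Rightarrow> case y of (t, R') \<Rightarrow>
     (\<exists>f. strict_mono_on {..<length s} f \<and> f ` {..<length s} \<subseteq> {..<length t} \<and>
        (\<forall>i<length s. \<forall>j<length s. R i j \<longleftrightarrow> R' (f i) (f j)) \<and>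
        (\<forall>i<length s. P (s ! i) (t ! f i))))"

end

theory Submission
  imports Defs "HOL-Library.Sublist" "HOL-Library.Ramsey"
begin

(* If R is a quasi-order on the positions of s extending their natural order, then a later
   position j is R-below an earlier position i only if all positions in between are
   R-equivalent. So the R-classes are consecutive blocks and R compares positions by the
   number of their block: a quasi-ordered sequence is a list of nonempty blocks over Q.
   A Higman embedding of block lists, in which blocks are compared by Higman embedding,
   induces an embedding of the quasi-ordered sequences, so the theorem follows from two
   applications of Higman's lemma, which is proved by Nash-Williams' minimal bad sequence
   argument. *)

definition bad_seq :: "'a set \<Rightarrow> ('a \<Rightarrow> 'a \<Rightarrow> bool) \<Rightarrow> (nat \<Rightarrow> 'a) \<Rightarrow> bool" where
  "bad_seq A r g \<longleftrightarrow> (\<forall>i. g i \<in> A) \<and> (\<forall>i j. i < j \<longrightarrow> \<not> r (g i) (g j))"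

lemma wqo_on_iff_no_bad_seq: "wqo_on A r \<longleftrightarrow> qo_on A r \<and> (\<nexists>g. bad_seq A r g)"
  unfolding wqo_on_def bad_seq_def by blast

lemma wqo_on_chain_subseq:
  assumes "wqo_on A P" and "\<And>i. g i \<in> A"
  obtains \<phi> :: "nat \<Rightarrow> nat"
  where "strict_mono \<phi>" and "\<And>i j. i < j \<Longrightarrow> P (g (\<phi> i)) (g (\<phi> j))"
proof -
  define c where "c X = (if P (g (Min X)) (g (Max X)) then 0 else 1 :: nat)" for X
  have "\<forall>x\<in>UNIV. \<forall>y\<in>UNIV. x \<noteq> y \<longrightarrow> c {x, y} < 2"
    by (simp add: c_def)
  from Ramsey2[OF infinite_UNIV_nat this]
  obtain Y t where Y: "infinite Y" "t < 2" "\<forall>x\<in>Y. \<forall>y\<in>Y. x \<noteq> y \<longrightarrow> c {x, y} = t"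
    by (elim exE conjE)
  define \<phi> where "\<phi> = enumerate Y"
  have \<phi>: "strict_mono \<phi>"
    using Y(1) by (simp add: \<phi>_def strict_mono_enumerate)
  have colour_iff: "t = 0 \<longleftrightarrow> P (g (\<phi> i)) (g (\<phi> j))" if "i < j" for i j
  proof -
    have "\<phi> i < \<phi> j"
      using \<phi> that by (rule strict_monoD)
    moreover have "\<phi> i \<in> Y" "\<phi> j \<in> Y"
      using Y(1) by (simp_all add: \<phi>_def enumerate_in_set)
    ultimately have "c {\<phi> i, \<phi> j} = t"
      using Y(3) by auto
    moreover have "c {\<phi> i, \<phi> j} = (if P (g (\<phi> i)) (g (\<phi> j)) then 0 else 1)"
      using \<open>\<phi> i < \<phi> j\<close> by (simp add: c_def)
    ultimately show ?thesis
      by (simp split: if_splits)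
  qed
  obtain i j where "i < j" "P (g (\<phi> i)) (g (\<phi> j))"
    using assms unfolding wqo_on_def by (auto dest!: spec[of _ "\<lambda>k. g (\<phi> k)"])
  then show thesis
    using that \<phi> colour_iff by blast
qed

lemma ex_minimal_bad_seq:
  fixes size :: "'a \<Rightarrow> nat"
  assumes "bad_seq A r g"
  obtains m where "bad_seq A r m"
    and "\<And>n h. bad_seq A r h \<Longrightarrow> (\<And>i. i < n \<Longrightarrow> h i = m i) \<Longrightarrow> size (m n) \<le> size (h n)"
proof -
  define G where
    "G = rec_nat g (\<lambda>n Gn. ARG_MIN (\<lambda>h. size (h n)) h. bad_seq A r h \<and> (\<forall>i<n. h i = Gn i))"
  have G_Suc: "bad_seq A r (G (Suc n)) \<and> (\<forall>i<n. G (Suc n) i = G n i) \<and>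
      (\<forall>h. bad_seq A r h \<and> (\<forall>i<n. h i = G n i) \<longrightarrow> size (G (Suc n) n) \<le> size (h n))"
    if "bad_seq A r (G n)" for n
    using arg_min_nat_lemma[where m = "\<lambda>h. size (h n)"
        and P = "\<lambda>h. bad_seq A r h \<and> (\<forall>i<n. h i = G n i)", OF conjI[OF that]]
    by (simp add: G_def)
  have G_bad: "bad_seq A r (G n)" for n
  proof (induction n)
    case 0
    then show ?case using assms by (simp add: G_def)
  next
    case (Suc n)
    then show ?case using G_Suc by blast
  qed
  define m where "m n = G (Suc n) n" for n
  have G_stable: "G k i = m i" if "i < k" for i k
    using that
  proof (induction k)
    case (Suc k)
    then show ?case
      using G_Suc[OF G_bad] by (cases "i = k") (auto simp: m_def)
  qed simp
  show thesis
  proof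
    show "bad_seq A r m"
      unfolding bad_seq_def
    proof (intro conjI allI impI)
      show "m i \<in> A" for i
        using G_bad unfolding bad_seq_def m_def by blast
      show "\<not> r (m i) (m j)" if "i < j" for i j
        using G_bad[of "Suc j"] G_stable[of i "Suc j"] that unfolding bad_seq_def m_def by force
    qed
    show "size (m n) \<le> size (h n)" if "bad_seq A r h" "\<And>i. i < n \<Longrightarrow> h i = m i" for n h
    proof -
      have "\<forall>i<n. h i = G n i"
        using that(2) G_stable by simp
      then show ?thesis
        using G_Suc[OF G_bad, of n] that(1) unfolding m_def by blast
    qed
  qed
qed

lemma qo_on_lists_list_emb:
  assumes "qo_on A P"
  shows "qo_on (lists A) (list_emb P)"
  unfolding qo_on_def
proof (intro conjI ballI impI)
  show "list_emb P xs xs" if "xs \<in> lists A" for xs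
    using assms that unfolding qo_on_def by (intro list_emb_refl) auto
  have P_trans: "P x z" if "x \<in> A" "y \<in> A" "z \<in> A" "P x y" "P y z" for x y z
    using assms that unfolding qo_on_def by blast
  show "list_emb P xs zs"
    if "xs \<in> lists A" "ys \<in> lists A" "zs \<in> lists A" "list_emb P xs ys" "list_emb P ys zs" for xs ys zs
    using that P_trans by (intro list_emb_trans[of xs ys zs]) auto
qed

lemma bad_seq_prefix_tails:
  assumes m_bad: "bad_seq (lists A) (list_emb P) m" and m_Cons: "\<And>i. m i = a i # r i"
    and \<phi>: "strict_mono \<phi>" and a_chain: "\<And>i j. i < j \<Longrightarrow> P (a (\<phi> i)) (a (\<phi> j))"
  shows "bad_seq (lists A) (list_emb P) (\<lambda>i. if i < \<phi> 0 then m i else r (\<phi> (i - \<phi> 0)))"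
    (is "bad_seq _ _ ?h")
  unfolding bad_seq_def
proof (intro conjI allI impI notI)
  have m_lists: "m i \<in> lists A" and m_no_emb: "i < j \<Longrightarrow> \<not> list_emb P (m i) (m j)" for i j
    using m_bad unfolding bad_seq_def by blast+
  have r_lists: "r i \<in> lists A" for i
    using m_lists[of i] by (simp add: m_Cons)
  show "?h i \<in> lists A" for i
    using m_lists r_lists by simp
  define N where "N = \<phi> 0"
  fix i j
  assume "i < j" and emb: "list_emb P (?h i) (?h j)"
  consider "j < N" | "i < N" "N \<le> j" | "N \<le> i"
    using \<open>i < j\<close> by linarith
  then show False
  proof cases
    case 1
    then show False
      using emb m_no_emb \<open>i < j\<close> by (simp add: N_def)
  next
    case 2
    then have "list_emb P (m i) (r (\<phi> (j - N)))"
      using emb by (simp add: N_def)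
    then have "list_emb P (m i) (m (\<phi> (j - N)))"
      unfolding m_Cons[of "\<phi> (j - N)"] by (rule list_emb_Cons)
    moreover have "i < \<phi> (j - N)"
      using 2 \<phi> by (simp add: N_def strict_mono_less_eq less_le_trans)
    ultimately show False
      using m_no_emb by blast
  next
    case 3
    then have "list_emb P (r (\<phi> (i - N))) (r (\<phi> (j - N)))"
      using emb \<open>i < j\<close> by (simp add: N_def)
    moreover have "i - N < j - N"
      using 3 \<open>i < j\<close> by simp
    ultimately have "list_emb P (m (\<phi> (i - N))) (m (\<phi> (j - N)))"
      using a_chain by (simp add: m_Cons list_emb_Cons2)
    moreover have "\<phi> (i - N) < \<phi> (j - N)"
      using \<phi> \<open>i - N < j - N\<close> by (rule strict_monoD)
    ultimately show False
      using m_no_emb by blast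
  qed
qed

theorem wqo_on_lists_list_emb:
  assumes "wqo_on A P"
  shows "wqo_on (lists A) (list_emb P)"
proof -
  have "\<nexists>g. bad_seq (lists A) (list_emb P) g"
  proof
    assume "\<exists>g. bad_seq (lists A) (list_emb P) g"
    then obtain g where "bad_seq (lists A) (list_emb P) g" ..
    then obtain m where m_bad: "bad_seq (lists A) (list_emb P) m"
      and m_min: "\<And>n h. bad_seq (lists A) (list_emb P) h \<Longrightarrow> (\<And>i. i < n \<Longrightarrow> h i = m i)
        \<Longrightarrow> length (m n) \<le> length (h n)"
      by (rule ex_minimal_bad_seq[where size = length]) blast
    have "m i \<noteq> []" for i
    proof
      assume "m i = []"
      then have "list_emb P (m i) (m (Suc i))"
        by simp
      then show False
        using m_bad unfolding bad_seq_def by blast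
    qed
    define a where "a i = hd (m i)" for i
    define r where "r i = tl (m i)" for i
    have m_Cons: "m i = a i # r i" for i
      using \<open>\<And>i. m i \<noteq> []\<close> by (simp add: a_def r_def)
    have "a i \<in> A" for i
      using m_bad unfolding bad_seq_def by (auto simp: m_Cons dest: spec[of _ i])
    then obtain \<phi> :: "nat \<Rightarrow> nat"
      where "strict_mono \<phi>" and "\<And>i j. i < j \<Longrightarrow> P (a (\<phi> i)) (a (\<phi> j))"
      using wqo_on_chain_subseq[of A P a, OF assms] by blast
    then have "bad_seq (lists A) (list_emb P) (\<lambda>i. if i < \<phi> 0 then m i else r (\<phi> (i - \<phi> 0)))"
      by (rule bad_seq_prefix_tails[OF m_bad m_Cons])
    from m_min[OF this, of "\<phi> 0"] have "length (m (\<phi> 0)) \<le> length (r (\<phi> 0))"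
      by simp
    then show False
      by (simp add: m_Cons)
  qed
  then show ?thesis
    using assms qo_on_lists_list_emb unfolding wqo_on_iff_no_bad_seq by blast
qed

lemma qoseqD:
  assumes "qoseq Q (s, R)"
  shows qoseq_set: "set s \<subseteq> Q"
    and qoseq_refl: "i < length s \<Longrightarrow> R i i"
    and qoseq_trans: "i < length s \<Longrightarrow> j < length s \<Longrightarrow> k < length s \<Longrightarrow> R i j \<Longrightarrow> R j k \<Longrightarrow> R i k"
    and qoseq_less: "i < j \<Longrightarrow> j < length s \<Longrightarrow> R i j"
  using assms unfolding qoseq_def qo_on_def lessThan_iff by blast+

lemma qoseq_Cons_tail:
  assumes "qoseq Q (x # s, R)"
  shows "qoseq Q (s, \<lambda>i j. R (Suc i) (Suc j))"
  unfolding qoseq_def qo_on_def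
proof (simp only: prod.case, intro conjI allI ballI impI)
  show "set s \<subseteq> Q"
    using qoseq_set[OF assms] by simp
  show "R (Suc i) (Suc i)" if "i \<in> {..<length s}" for i
    using qoseq_refl[OF assms] that by simp
  show "R (Suc i) (Suc k)" if "i \<in> {..<length s}" "j \<in> {..<length s}" "k \<in> {..<length s}"
    and "R (Suc i) (Suc j)" "R (Suc j) (Suc k)" for i j k
    using qoseq_trans[OF assms, of "Suc i" "Suc j" "Suc k"] that by simp
  show "R (Suc i) (Suc j)" if "i < j \<and> j < length s" for i j
    using qoseq_less[OF assms, of "Suc i" "Suc j"] that by simp
qed

lemma
  assumes "qoseq Q (x # s, R)"
  shows qoseq_Cons_rel_0_left: "j \<le> length s \<Longrightarrow> R 0 j"
    and qoseq_Cons_rel_0_right: "i < length s \<Longrightarrow> R (Suc i) 0 \<longleftrightarrow> R 1 0 \<and> R (Suc i) 1"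
proof -
  have refl: "R i i" and less: "R i j" if "i \<le> j" "j \<le> length s" for i j
    using that qoseq_refl[OF assms] qoseq_less[OF assms] by (auto simp: le_less)
  have trans: "R i j \<Longrightarrow> R j k \<Longrightarrow> R i k" if "i \<le> length s" "j \<le> length s" "k \<le> length s" for i j k
    using that qoseq_trans[OF assms, of i j k] by simp
  show "R 0 j" if "j \<le> length s"
    using that less by simp
  show "R (Suc i) 0 \<longleftrightarrow> R 1 0 \<and> R (Suc i) 1" if "i < length s"
    using that less[of 1 "Suc i"] less[of 0 1] trans[of 1 "Suc i" 0] trans[of "Suc i" 0 1]
      trans[of "Suc i" 1 0]
    by auto
qed

fun block_index :: "'a list list \<Rightarrow> nat \<Rightarrow> nat" where
  "block_index [] i = 0"
| "block_index (b # bs) i = (if i < length b then 0 else Suc (block_index bs (i - length b)))"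

definition block_decomposition :: "'a list list \<Rightarrow> 'a list \<times> (nat \<Rightarrow> nat \<Rightarrow> bool) \<Rightarrow> bool" where
  "block_decomposition bs x \<longleftrightarrow> (case x of (s, R) \<Rightarrow>
     [] \<notin> set bs \<and> concat bs = s \<and>
     (\<forall>i<length s. \<forall>j<length s. R i j \<longleftrightarrow> block_index bs i \<le> block_index bs j))"

lemma block_decomposition_Cons_same_block:
  assumes x: "qoseq Q (x # s, R)" and "R 1 0"
    and bs: "block_decomposition (b # bs) (s, \<lambda>i j. R (Suc i) (Suc j))"
  shows "block_decomposition ((x # b) # bs) (x # s, R)"
proof -
  have "b \<noteq> []" and "[] \<notin> set bs" and concat_bs: "concat (b # bs) = s"
    and R_bs: "\<And>i j. i < length s \<Longrightarrow> j < length s \<Longrightarrow>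
      R (Suc i) (Suc j) \<longleftrightarrow> block_index (b # bs) i \<le> block_index (b # bs) j"
    using bs unfolding block_decomposition_def by auto
  have "s \<noteq> []"
    using concat_bs \<open>b \<noteq> []\<close> by auto
  have "R (Suc i) 0 \<longleftrightarrow> block_index (b # bs) i \<le> 0" if "i < length s" for i
    using qoseq_Cons_rel_0_right[OF x that] \<open>R 1 0\<close> R_bs[OF that] \<open>s \<noteq> []\<close> \<open>b \<noteq> []\<close>
    by simp
  then show ?thesis
    using \<open>[] \<notin> set bs\<close> concat_bs R_bs qoseq_Cons_rel_0_left[OF x]
    by (auto simp: block_decomposition_def less_Suc_eq_0_disj)
qed

lemma block_decomposition_Cons_new_block:
  assumes x: "qoseq Q (x # s, R)" and "s = [] \<or> \<not> R 1 0"
    and bs: "block_decomposition bs (s, \<lambda>i j. R (Suc i) (Suc j))"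
  shows "block_decomposition ([x] # bs) (x # s, R)"
proof -
  have "\<not> R (Suc i) 0" if "i < length s" for i
    using assms(2) qoseq_Cons_rel_0_right[OF x that] that by auto
  then show ?thesis
    using bs qoseq_Cons_rel_0_left[OF x]
    by (auto simp: block_decomposition_def less_Suc_eq_0_disj)
qed

lemma qoseq_ex_block_decomposition:
  assumes "qoseq Q x"
  shows "\<exists>bs \<in> lists (lists Q). block_decomposition bs x"
proof -
  obtain s R where x: "x = (s, R)"
    by fastforce
  have "\<exists>bs \<in> lists (lists Q). block_decomposition bs (s, R)" if "qoseq Q (s, R)"
    using that
  proof (induction s arbitrary: R)
    case Nil
    show ?case
      by (rule bexI[of _ "[]"]) (simp_all add: block_decomposition_def)
  next
    case (Cons y s)
    obtain bs where bs: "bs \<in> lists (lists Q)" "block_decomposition bs (s, \<lambda>i j. R (Suc i) (Suc j))"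
      using Cons.IH[OF qoseq_Cons_tail[OF Cons.prems]] by blast
    have "y \<in> Q"
      using qoseq_set[OF Cons.prems] by simp
    consider (same_block) b cs where "bs = b # cs" "R 1 0" | (new_block) "s = [] \<or> \<not> R 1 0"
      using bs(2) by (cases bs) (auto simp: block_decomposition_def)
    then show ?case
    proof cases
      case same_block
      then show ?thesis
        using block_decomposition_Cons_same_block[OF Cons.prems same_block(2)] bs \<open>y \<in> Q\<close>
        by (intro bexI[of _ "(y # b) # cs"]) auto
    next
      case new_block
      then show ?thesis
        using block_decomposition_Cons_new_block[OF Cons.prems new_block] bs \<open>y \<in> Q\<close>
        by (intro bexI[of _ "[y] # bs"]) auto
    qed
  qed
  then show ?thesis
    using assms x by blast
qed

lemma list_emb_ex_index_map:
  assumes "list_emb P xs ys"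
  shows "\<exists>f. strict_mono_on {..<length xs} f \<and> f ` {..<length xs} \<subseteq> {..<length ys} \<and>
    (\<forall>i<length xs. P (xs ! i) (ys ! f i))"
  using assms
proof (induction rule: list_emb.induct)
  case (list_emb_Nil ys)
  show ?case
    by (auto intro: strict_mono_onI)
next
  case (list_emb_Cons xs ys y)
  then obtain f where "strict_mono_on {..<length xs} f" "f ` {..<length xs} \<subseteq> {..<length ys}"
    "\<forall>i<length xs. P (xs ! i) (ys ! f i)"
    by blast
  then show ?case
    by (intro exI[of _ "\<lambda>i. Suc (f i)"]) (auto intro!: strict_mono_onI dest: strict_mono_onD)
next
  case (list_emb_Cons2 x y xs ys)
  then obtain f where "strict_mono_on {..<length xs} f" "f ` {..<length xs} \<subseteq> {..<length ys}"
    "\<forall>i<length xs. P (xs ! i) (ys ! f i)"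
    by blast
  then show ?case
    using \<open>P x y\<close>
    by (intro exI[of _ "\<lambda>i. case i of 0 \<Rightarrow> 0 | Suc i \<Rightarrow> Suc (f i)"])
      (auto intro!: strict_mono_onI dest: strict_mono_onD
        simp: image_subset_iff less_Suc_eq_0_disj split: nat.split)
qed

lemma qoseq_le_concat_if_list_emb:
  assumes "list_emb (list_emb P) bs cs"
  shows "qoseq_le P (concat bs, \<lambda>i j. block_index bs i \<le> block_index bs j)
    (concat cs, \<lambda>i j. block_index cs i \<le> block_index cs j)"
  using assms unfolding qoseq_le_def prod.case
proof (induction rule: list_emb.induct)
  case (list_emb_Nil cs)
  show ?case
    by (auto intro: strict_mono_onI)
next
  case (list_emb_Cons bs cs c)
  then obtain f where f: "strict_mono_on {..<length (concat bs)} f"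
    "f ` {..<length (concat bs)} \<subseteq> {..<length (concat cs)}"
    "\<forall>i<length (concat bs). \<forall>j<length (concat bs).
       block_index bs i \<le> block_index bs j \<longleftrightarrow> block_index cs (f i) \<le> block_index cs (f j)"
    "\<forall>i<length (concat bs). P (concat bs ! i) (concat cs ! f i)"
    by blast
  then show ?case
    by (intro exI[of _ "\<lambda>i. length c + f i"])
      (auto intro!: strict_mono_onI dest: strict_mono_onD simp: image_subset_iff nth_append)
next
  case (list_emb_Cons2 b c bs cs)
  obtain g where g: "strict_mono_on {..<length b} g" "g ` {..<length b} \<subseteq> {..<length c}"
    "\<forall>i<length b. P (b ! i) (c ! g i)"
    using list_emb_ex_index_map[OF list_emb_Cons2(1)] by blast
  obtain f where f: "strict_mono_on {..<length (concat bs)} f"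
    "f ` {..<length (concat bs)} \<subseteq> {..<length (concat cs)}"
    "\<forall>i<length (concat bs). \<forall>j<length (concat bs).
       block_index bs i \<le> block_index bs j \<longleftrightarrow> block_index cs (f i) \<le> block_index cs (f j)"
    "\<forall>i<length (concat bs). P (concat bs ! i) (concat cs ! f i)"
    using list_emb_Cons2(3) by blast
  define h where "h i = (if i < length b then g i else length c + f (i - length b))" for i
  have g_less: "g i < length c" if "i < length b" for i
    using g(2) that by auto
  have "strict_mono_on {..<length (concat (b # bs))} h"
  proof (rule strict_mono_onI)
    fix i j
    assume "i \<in> {..<length (concat (b # bs))}" "j \<in> {..<length (concat (b # bs))}" "i < j"
    then show "h i < h j"
      using g_less strict_mono_onD[OF g(1)]
        strict_mono_onD[OF f(1), of "i - length b" "j - length b"]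
      by (auto simp: h_def trans_less_add1)
  qed
  moreover have "h ` {..<length (concat (b # bs))} \<subseteq> {..<length (concat (c # cs))}"
    using f(2) g_less by (fastforce simp: h_def image_subset_iff)
  moreover have "\<forall>i<length (concat (b # bs)). \<forall>j<length (concat (b # bs)).
      block_index (b # bs) i \<le> block_index (b # bs) j \<longleftrightarrow>
      block_index (c # cs) (h i) \<le> block_index (c # cs) (h j)"
    using f(3) g(2) by (auto simp: h_def image_subset_iff)
  moreover have "\<forall>i<length (concat (b # bs)). P (concat (b # bs) ! i) (concat (c # cs) ! h i)"
    using f(4) g(2,3) by (auto simp: h_def image_subset_iff nth_append)
  ultimately show ?case
    by blast
qed

lemma qoseq_le_if_list_emb_block_decompositions:
  assumes "block_decomposition bs (s, R)" and "block_decomposition cs (t, R')"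
    and "list_emb (list_emb P) bs cs"
  shows "qoseq_le P (s, R) (t, R')"
proof -
  obtain f where f: "strict_mono_on {..<length s} f" "f ` {..<length s} \<subseteq> {..<length t}"
    "\<forall>i<length s. \<forall>j<length s.
       block_index bs i \<le> block_index bs j \<longleftrightarrow> block_index cs (f i) \<le> block_index cs (f j)"
    "\<forall>i<length s. P (s ! i) (t ! f i)"
    using qoseq_le_concat_if_list_emb[OF assms(3)] assms(1,2)
    unfolding qoseq_le_def block_decomposition_def by auto
  moreover have "\<forall>i<length s. \<forall>j<length s. R i j \<longleftrightarrow> R' (f i) (f j)"
    using assms(1,2) f(2,3) unfolding block_decomposition_def by (auto simp: image_subset_iff)
  ultimately show ?thesis
    unfolding qoseq_le_def by auto
qed

lemma qoseq_le_refl: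
  assumes "\<And>x. x \<in> set s \<Longrightarrow> P x x"
  shows "qoseq_le P (s, R) (s, R)"
  unfolding qoseq_le_def prod.case
  using assms by (intro exI[of _ id] conjI) (auto intro: strict_mono_onI)

lemma qoseq_le_trans:
  assumes "\<And>x y z. x \<in> set s \<Longrightarrow> y \<in> set t \<Longrightarrow> z \<in> set u \<Longrightarrow> P x y \<Longrightarrow> P y z \<Longrightarrow> P x z"
    and "qoseq_le P (s, R) (t, R')" and "qoseq_le P (t, R') (u, R'')"
  shows "qoseq_le P (s, R) (u, R'')"
proof -
  obtain f where f: "strict_mono_on {..<length s} f" "\<And>i. i < length s \<Longrightarrow> f i < length t"
    "\<forall>i<length s. \<forall>j<length s. R i j \<longleftrightarrow> R' (f i) (f j)" "\<forall>i<length s. P (s ! i) (t ! f i)"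
    using assms(2) unfolding qoseq_le_def prod.case image_subset_iff lessThan_iff by blast
  obtain g where g: "strict_mono_on {..<length t} g" "\<And>i. i < length t \<Longrightarrow> g i < length u"
    "\<forall>i<length t. \<forall>j<length t. R' i j \<longleftrightarrow> R'' (g i) (g j)" "\<forall>i<length t. P (t ! i) (u ! g i)"
    using assms(3) unfolding qoseq_le_def prod.case image_subset_iff lessThan_iff by blast
  show ?thesis
    unfolding qoseq_le_def prod.case
  proof (intro exI[of _ "g \<circ> f"] conjI allI impI)
    show "strict_mono_on {..<length s} (g \<circ> f)"
    proof (rule strict_mono_onI)
      fix i j
      assume "i \<in> {..<length s}" "j \<in> {..<length s}" "i < j"
      then have "f i < f j" "f i \<in> {..<length t}" "f j \<in> {..<length t}"
        using strict_mono_onD[OF f(1)] f(2) by auto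
      then show "(g \<circ> f) i < (g \<circ> f) j"
        using strict_mono_onD[OF g(1)] by simp
    qed
    show "(g \<circ> f) ` {..<length s} \<subseteq> {..<length u}"
      using f(2) g(2) by auto
    show "R i j \<longleftrightarrow> R'' ((g \<circ> f) i) ((g \<circ> f) j)" if "i < length s" "j < length s" for i j
      using f(2,3) g(3) that by simp
    show "P (s ! i) (u ! (g \<circ> f) i)" if "i < length s" for i
      using assms(1)[of "s ! i" "t ! f i" "u ! g (f i)"] f(2,4) g(2,4) that by simp
  qed
qed

lemma qo_on_qoseq_le:
  assumes "qo_on Q P"
  shows "qo_on {x. qoseq Q x} (qoseq_le P)"
  unfolding qo_on_def
proof (intro conjI ballI impI)
  fix x assume "x \<in> {x. qoseq Q x}"
  moreover obtain s R where "x = (s, R)"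
    by fastforce
  ultimately show "qoseq_le P x x"
    using assms qoseq_set[of Q s R] unfolding qo_on_def by (auto intro: qoseq_le_refl)
next
  fix x y z assume "x \<in> {x. qoseq Q x}" "y \<in> {x. qoseq Q x}" "z \<in> {x. qoseq Q x}"
    and xy: "qoseq_le P x y" and yz: "qoseq_le P y z"
  moreover obtain s R t R' u R'' where x: "x = (s, R)" and y: "y = (t, R')" and z: "z = (u, R'')"
    by (metis prod.exhaust)
  ultimately have "set s \<subseteq> Q" "set t \<subseteq> Q" "set u \<subseteq> Q"
    using qoseq_set by auto
  then have "P a c" if "a \<in> set s" "b \<in> set t" "c \<in> set u" "P a b" "P b c" for a b c
    using assms that unfolding qo_on_def by blast
  then show "qoseq_le P x z"
    using qoseq_le_trans xy yz unfolding x y z by blast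
qed

theorem lemma7:
  fixes Q :: "'a set" and P :: "'a \<Rightarrow> 'a \<Rightarrow> bool"
  assumes "wqo_on Q P"
  shows "wqo_on {x. qoseq Q x} (qoseq_le P)"
proof -
  have blocks_good: "\<exists>i j. i < j \<and> list_emb (list_emb P) (B i) (B j)"
    if "\<forall>n. B n \<in> lists (lists Q)" for B :: "nat \<Rightarrow> 'a list list"
    using wqo_on_lists_list_emb[OF wqo_on_lists_list_emb[OF assms]] that unfolding wqo_on_def by blast
  have "\<exists>i j. i < j \<and> qoseq_le P (X i) (X j)"
    if "\<forall>n. X n \<in> {x. qoseq Q x}" for X :: "nat \<Rightarrow> 'a list \<times> (nat \<Rightarrow> nat \<Rightarrow> bool)"
  proof -
    have "\<forall>n. \<exists>bs. bs \<in> lists (lists Q) \<and> block_decomposition bs (X n)"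
      using that qoseq_ex_block_decomposition by blast
    from choice[OF this] obtain B
      where B: "\<forall>n. B n \<in> lists (lists Q) \<and> block_decomposition (B n) (X n)" ..
    then obtain i j where "i < j" and emb: "list_emb (list_emb P) (B i) (B j)"
      using blocks_good[of B] by blast
    obtain s R t R' where "X i = (s, R)" "X j = (t, R')"
      by fastforce
    then have "qoseq_le P (X i) (X j)"
      using B qoseq_le_if_list_emb_block_decompositions[OF _ _ emb] by metis
    with \<open>i < j\<close> show ?thesis
      by blast
  qed
  then show ?thesis
    using assms qo_on_qoseq_le unfolding wqo_on_def by blast
qed

end
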